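(* Let $s\in[0,1)$, let $\Omega\subset\mathbb{R}^N$ be a bounded open Lipschitz set, let $V,f\in L^\infty(\Omega)$, and let $u\in\mathbb{H}^s(\Omega)$ be a weak subsolution of $\mathcal{D}^s_\Omega u+V(x)u=f$ in $\Omega$, i.e. $$\mathcal{E}_s(u,\phi)+\int_\Omega V u\phi\,dx\le\int_\Omega f\phi\,dx\qquad\text{for all }\phi\in\mathbb{H}^s(\Omega),\ \phi\ge0.$$ Then there exists a constant $c_0>0$ depending only on $N$, $\Omega$, $\|V\|_{L^\infty(\Omega)}$, $\|f\|_{L^\infty(\Omega)}$ and $\|u^+\|_{L^2(\Omega)}$, and independent of $s$, such that $u\le c_0$ in $\Omega$.
   Context: A bounded open set $\Omega\subset\mathbb{R}^N$ is a Lipschitz set if each boundary point has a neighborhood in which $\partial\Omega$ is, after rotation, the graph of a Lipschitz function. $\mathbb{H}^s(\Omega)=\{u\in L^2(\Omega):\int_\Omega\int_\Omega\frac{(u(x)-u(y))^2}{|x-y|^{N+2s}}dxdy<\infty\}$, $\mathcal{E}_s(u,v)=\frac12\int_\Omega\int_\Omega\frac{(u(x)-u(y))(v(x)-v(y))}{|x-y|^{N+2s}}dxdy$. $u^+=\max\{u,0\}$. *)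

theory Defs
  imports "HOL-Analysis.Analysis" "HOL-Probability.Essential_Supremum"
begin

text \<open>Lipschitz open set: around every boundary point, after a rotation (encoded by a
unit direction e playing the role of the last coordinate axis), Omega is locally the
region strictly below the graph of a Lipschitz function defined on the hyperplane
orthogonal to e.\<close>
definition lipschitz_set :: "'a::euclidean_space set \<Rightarrow> bool" where
  "lipschitz_set \<Omega> \<longleftrightarrow> open \<Omega> \<and> bounded \<Omega> \<and>
     (\<forall>p\<in>frontier \<Omega>. \<exists>U e g L. open U \<and> p \<in> U \<and> norm e = 1 \<and>
        L-lipschitz_on {y. y \<bullet> e = 0} g \<and>
        \<Omega> \<inter> U = {x\<in>U. x \<bullet> e < g (x - (x \<bullet> e) *\<^sub>R e)} \<and>
        frontier \<Omega> \<inter> U = {x\<in>U. x \<bullet> e = g (x - (x \<bullet> e) *\<^sub>R e)})"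

definition Linf :: "'a::euclidean_space set \<Rightarrow> ('a \<Rightarrow> real) \<Rightarrow> bool" where
  "Linf \<Omega> V \<longleftrightarrow> V \<in> borel_measurable (lebesgue_on \<Omega>) \<and>
      esssup (lebesgue_on \<Omega>) (\<lambda>x. ereal \<bar>V x\<bar>) < \<infinity>"

definition Linf_norm :: "'a::euclidean_space set \<Rightarrow> ('a \<Rightarrow> real) \<Rightarrow> real" where
  "Linf_norm \<Omega> V = real_of_ereal (esssup (lebesgue_on \<Omega>) (\<lambda>x. ereal \<bar>V x\<bar>))"

definition L2_norm_on :: "'a::euclidean_space set \<Rightarrow> ('a \<Rightarrow> real) \<Rightarrow> real" where
  "L2_norm_on \<Omega> u = sqrt (integral\<^sup>L (lebesgue_on \<Omega>) (\<lambda>x. (u x)\<^sup>2))"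

definition frac_kernel :: "real \<Rightarrow> 'a::euclidean_space \<Rightarrow> 'a \<Rightarrow> real" where
  "frac_kernel s x y = 1 / (dist x y powr (real DIM('a) + 2 * s))"

definition Hs :: "real \<Rightarrow> 'a::euclidean_space set \<Rightarrow> ('a \<Rightarrow> real) set" where
  "Hs s \<Omega> = {u. u \<in> borel_measurable (lebesgue_on \<Omega>) \<and>
      integrable (lebesgue_on \<Omega>) (\<lambda>x. (u x)\<^sup>2) \<and>
      (\<integral>\<^sup>+ x. \<integral>\<^sup>+ y. ennreal ((u x - u y)\<^sup>2 * frac_kernel s x y)
          \<partial>lebesgue_on \<Omega> \<partial>lebesgue_on \<Omega>) < \<infinity>}"

definition Es :: "real \<Rightarrow> 'a::euclidean_space set \<Rightarrow> ('a \<Rightarrow> real) \<Rightarrow> ('a \<Rightarrow> real) \<Rightarrow> real" where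
  "Es s \<Omega> u v = 1/2 * integral\<^sup>L (lebesgue_on \<Omega> \<Otimes>\<^sub>M lebesgue_on \<Omega>)
      (\<lambda>(x,y). (u x - u y) * (v x - v y) * frac_kernel s x y)"

definition weak_subsolution ::
  "real \<Rightarrow> 'a::euclidean_space set \<Rightarrow> ('a \<Rightarrow> real) \<Rightarrow> ('a \<Rightarrow> real) \<Rightarrow> ('a \<Rightarrow> real) \<Rightarrow> bool" where
  "weak_subsolution s \<Omega> V f u \<longleftrightarrow> u \<in> Hs s \<Omega> \<and>
     (\<forall>\<phi>\<in>Hs s \<Omega>. (AE x in lebesgue_on \<Omega>. 0 \<le> \<phi> x) \<longrightarrow>
        Es s \<Omega> u \<phi> + integral\<^sup>L (lebesgue_on \<Omega>) (\<lambda>x. V x * u x * \<phi> x)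
          \<le> integral\<^sup>L (lebesgue_on \<Omega>) (\<lambda>x. f x * \<phi> x))"

end

theory Submission
  imports Defs
begin

text \<open>Test the inequality with v = max (u - K) 0. Cutting the kernel off near the diagonal,
  at |x - y| < \<epsilon>, can only lower the energy E_s(u, v), and leaves a kernel bounded by
  \<epsilon>^-(N+2) for every s in [0,1). Symmetrising the energy then gives
  E_s(u, v) \<ge> \<Lambda> \<integral> v u - \<epsilon>^-(N+2) \<integral> v \<integral> u^+, where \<Lambda> is a lower bound, uniform in x,
  for the mass of |x - y|^-(N+2s) over the y in \<Omega> with |x - y| \<ge> \<epsilon>. A Lipschitz set satisfies
  a uniform interior corkscrew condition, so around each point it contains disjoint balls at the
  scales r0 4^-j, each of which adds a fixed amount to this mass: taking \<epsilon> small, depending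
  only on \<Omega> and the norm of V, makes \<Lambda> \<ge> 1 + |V|. The equation then yields
  K \<integral> v \<le> \<integral> v u \<le> (|f| + \<epsilon>^-(N+2) \<integral> u^+) \<integral> v, and \<integral> u^+ \<le> (|\<Omega>| + |u^+|^2)/2, so \<integral> v = 0
  once K exceeds this bound.\<close>

section \<open>Interior corkscrew balls in Lipschitz sets\<close>

text \<open>Interior corkscrew condition, with the ball kept inside the annulus r/4 < |y - x| < r so
  that the balls for the scales r, r/4, r/16, ... are pairwise disjoint.\<close>
definition corkscrew_on :: "'a::metric_space set \<Rightarrow> 'a set \<Rightarrow> real \<Rightarrow> real \<Rightarrow> bool" where
  "corkscrew_on S \<Omega> r0 c \<longleftrightarrow> (\<forall>x\<in>S. \<forall>r. 0 < r \<and> r \<le> r0 \<longrightarrow>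
     (\<exists>z. ball z (c * r) \<subseteq> \<Omega> \<inter> (ball x r - cball x (r/4))))"

lemma corkscrew_on_mono:
  assumes "corkscrew_on S \<Omega> r0 c" "S' \<subseteq> S" "r0' \<le> r0" "c' \<le> c"
  shows "corkscrew_on S' \<Omega> r0' c'"
  unfolding corkscrew_on_def
proof (intro ballI allI impI)
  fix x r assume "x \<in> S'" and r: "0 < r \<and> r \<le> r0'"
  then obtain z where "ball z (c * r) \<subseteq> \<Omega> \<inter> (ball x r - cball x (r/4))"
    using assms unfolding corkscrew_on_def by force
  moreover have "ball z (c' * r) \<subseteq> ball z (c * r)"
    using r assms(4) by (intro subset_ball mult_right_mono) auto
  ultimately show "\<exists>z. ball z (c' * r) \<subseteq> \<Omega> \<inter> (ball x r - cball x (r/4))" by blast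
qed

lemma ball_subset_annulus:
  fixes x e :: "'a::real_normed_vector"
  assumes "norm e = 1" "\<rho> \<le> r/4"
  shows "ball (x - (r/2) *\<^sub>R e) \<rho> \<subseteq> ball x r - cball x (r/4)"
proof
  fix y assume y: "y \<in> ball (x - (r/2) *\<^sub>R e) \<rho>"
  then have "0 < \<rho>" by (metis mem_ball zero_le_dist le_less_trans)
  then have "0 < r" using assms(2) by linarith
  then have "dist x (x - (r/2) *\<^sub>R e) = r/2" using assms by (simp add: dist_norm)
  then show "y \<in> ball x r - cball x (r/4)"
    using y assms dist_triangle[of x y "x - (r/2) *\<^sub>R e"] dist_triangle[of x "x - (r/2) *\<^sub>R e" y]
    by (simp add: dist_commute)
qed

lemma corkscrew_on_interior:
  fixes \<Omega> :: "'a::euclidean_space set"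
  shows "corkscrew_on {x. ball x \<eta> \<subseteq> \<Omega>} \<Omega> \<eta> (1/4)"
  unfolding corkscrew_on_def
proof (intro ballI allI impI)
  fix x r assume x: "x \<in> {x. ball x \<eta> \<subseteq> \<Omega>}" and r: "0 < r \<and> r \<le> \<eta>"
  obtain e :: 'a where e: "norm e = 1" using nonempty_Basis norm_Basis by blast
  have "ball (x - (r/2) *\<^sub>R e) (1/4 * r) \<subseteq> ball x r - cball x (r/4)"
    using ball_subset_annulus[OF e] by simp
  moreover have "ball x r \<subseteq> \<Omega>" using x r by (meson mem_Collect_eq order_trans subset_ball)
  ultimately show "\<exists>z. ball z (1/4 * r) \<subseteq> \<Omega> \<inter> (ball x r - cball x (r/4))" by blast
qed

lemma norm_minus_inner_scaleR_le:
  fixes q e :: "'a::real_inner"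
  assumes "norm e = 1"
  shows "norm (q - (q \<bullet> e) *\<^sub>R e) \<le> norm q"
proof -
  have "(norm (q - (q \<bullet> e) *\<^sub>R e))\<^sup>2 = (norm q)\<^sup>2 - (q \<bullet> e)\<^sup>2"
    using assms unfolding power2_norm_eq_inner
    by (simp add: inner_diff_left inner_diff_right inner_commute power2_eq_square norm_eq_1)
  then have "(norm (q - (q \<bullet> e) *\<^sub>R e))\<^sup>2 \<le> (norm q)\<^sup>2" by simp
  then show ?thesis by (simp add: power2_le_iff_abs_le)
qed

lemma ball_below_lipschitz_graph:
  fixes x e :: "'a::euclidean_space"
  assumes e: "norm e = 1" and g: "L-lipschitz_on {y. y \<bullet> e = 0} g"
    and x: "x \<bullet> e < g (x - (x \<bullet> e) *\<^sub>R e)"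
  shows "ball (x - (r/2) *\<^sub>R e) (r / (4 * (1 + L))) \<subseteq> {y. y \<bullet> e < g (y - (y \<bullet> e) *\<^sub>R e)}"
proof
  fix y assume y: "y \<in> ball (x - (r/2) *\<^sub>R e) (r / (4 * (1 + L)))"
  have L: "0 \<le> L" using g by (rule lipschitz_on_nonneg)
  have ee: "e \<bullet> e = 1" using e by (simp add: norm_eq_1)
  define q where "q = y - (x - (r/2) *\<^sub>R e)"
  have q: "(1 + L) * norm q < r/4"
    using y L by (simp add: q_def dist_norm norm_minus_commute field_simps)
  have y_eq: "y = x - (r/2) *\<^sub>R e + q" by (simp add: q_def)
  have proj_diff: "(y - (y \<bullet> e) *\<^sub>R e) - (x - (x \<bullet> e) *\<^sub>R e) = q - (q \<bullet> e) *\<^sub>R e"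
    by (simp add: y_eq inner_add_left inner_diff_left ee algebra_simps)
  have "dist (g (y - (y \<bullet> e) *\<^sub>R e)) (g (x - (x \<bullet> e) *\<^sub>R e)) \<le> L * norm (q - (q \<bullet> e) *\<^sub>R e)"
    using lipschitz_onD[OF g, of "y - (y \<bullet> e) *\<^sub>R e" "x - (x \<bullet> e) *\<^sub>R e"] proj_diff
    by (simp add: inner_diff_left ee dist_norm)
  then have "g (x - (x \<bullet> e) *\<^sub>R e) - g (y - (y \<bullet> e) *\<^sub>R e) \<le> L * norm (q - (q \<bullet> e) *\<^sub>R e)"
    by (simp add: dist_real_def abs_le_iff)
  also have "\<dots> \<le> L * norm q"
    using norm_minus_inner_scaleR_le[OF e] L by (rule mult_left_mono)
  finally have "g (x - (x \<bullet> e) *\<^sub>R e) - L * norm q \<le> g (y - (y \<bullet> e) *\<^sub>R e)" by simp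
  moreover have "y \<bullet> e = x \<bullet> e - r/2 + q \<bullet> e" by (simp add: y_eq inner_add_left inner_diff_left ee)
  moreover have "q \<bullet> e \<le> norm q" using Cauchy_Schwarz_ineq2[of q e] e by simp
  moreover have "(1 + L) * norm q = norm q + L * norm q" by algebra
  moreover have "0 \<le> L * norm q" using L by simp
  ultimately have "y \<bullet> e < g (y - (y \<bullet> e) *\<^sub>R e)" using x q norm_ge_zero[of q] by linarith
  then show "y \<in> {y. y \<bullet> e < g (y - (y \<bullet> e) *\<^sub>R e)}" by simp
qed

lemma lipschitz_set_corkscrew_near_frontier:
  fixes \<Omega> :: "'a::euclidean_space set"
  assumes "lipschitz_set \<Omega>" "p \<in> frontier \<Omega>"
  obtains \<epsilon> c where "0 < \<epsilon>" "0 < c" "corkscrew_on (\<Omega> \<inter> ball p \<epsilon>) \<Omega> \<epsilon> c"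
proof -
  obtain U e g L where U: "open U" "p \<in> U" and e: "norm e = 1"
    and g: "L-lipschitz_on {y. y \<bullet> e = 0} g"
    and \<Omega>U: "\<Omega> \<inter> U = {x\<in>U. x \<bullet> e < g (x - (x \<bullet> e) *\<^sub>R e)}"
    using assms unfolding lipschitz_set_def by blast
  obtain \<delta> where \<delta>: "0 < \<delta>" "ball p \<delta> \<subseteq> U" using U open_contains_ball by blast
  have L: "0 \<le> L" using g by (rule lipschitz_on_nonneg)
  have "corkscrew_on (\<Omega> \<inter> ball p (\<delta>/2)) \<Omega> (\<delta>/2) (1 / (4 * (1 + L)))"
    unfolding corkscrew_on_def
  proof (intro ballI allI impI)
    fix x r assume x: "x \<in> \<Omega> \<inter> ball p (\<delta>/2)" and r: "0 < r \<and> r \<le> \<delta>/2"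
    define B where "B = ball (x - (r/2) *\<^sub>R e) (1 / (4 * (1 + L)) * r)"
    have B_annulus: "B \<subseteq> ball x r - cball x (r/4)"
      unfolding B_def using L r by (intro ball_subset_annulus[OF e]) (simp add: field_simps)
    have "B \<subseteq> ball p \<delta>"
    proof
      fix y assume "y \<in> B"
      then have "dist x y < r" using B_annulus by auto
      then show "y \<in> ball p \<delta>" using x r dist_triangle[of p y x] by simp
    qed
    moreover have "x \<in> U" using x \<delta> by auto
    then have "x \<bullet> e < g (x - (x \<bullet> e) *\<^sub>R e)" using x \<Omega>U by blast
    then have "B \<subseteq> {y. y \<bullet> e < g (y - (y \<bullet> e) *\<^sub>R e)}"
      unfolding B_def using ball_below_lipschitz_graph[OF e g] by simp
    ultimately have "B \<subseteq> \<Omega>" using \<delta> \<Omega>U by blast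
    then show "\<exists>z. ball z (1 / (4 * (1 + L)) * r) \<subseteq> \<Omega> \<inter> (ball x r - cball x (r/4))"
      using B_annulus unfolding B_def by blast
  qed
  then show thesis using that[of "\<delta>/2" "1 / (4 * (1 + L))"] \<delta> L by simp
qed

lemma lipschitz_set_corkscrew:
  fixes \<Omega> :: "'a::euclidean_space set"
  assumes \<Omega>: "lipschitz_set \<Omega>"
  obtains r0 c where "0 < r0" "r0 \<le> 1" "0 < c" "corkscrew_on \<Omega> \<Omega> r0 c"
proof -
  have "\<forall>p\<in>frontier \<Omega>. \<exists>\<epsilon> c. 0 < \<epsilon> \<and> 0 < c \<and> corkscrew_on (\<Omega> \<inter> ball p \<epsilon>) \<Omega> \<epsilon> c"
    using lipschitz_set_corkscrew_near_frontier[OF \<Omega>] by metis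
  then obtain E C where EC: "\<And>p. p \<in> frontier \<Omega> \<Longrightarrow>
      0 < E p \<and> 0 < C p \<and> corkscrew_on (\<Omega> \<inter> ball p (E p)) \<Omega> (E p) (C p)"
    by metis
  have "compact (frontier \<Omega>)" using \<Omega> unfolding lipschitz_set_def by blast
  moreover have "frontier \<Omega> \<subseteq> (\<Union>p\<in>frontier \<Omega>. ball p (E p/2))" using EC by force
  ultimately obtain T where T: "T \<subseteq> frontier \<Omega>" "finite T" "frontier \<Omega> \<subseteq> (\<Union>p\<in>T. ball p (E p/2))"
    by (elim compactE_image) auto
  define \<eta> where "\<eta> = Min (insert 1 ((\<lambda>p. E p/2) ` T))"
  define c where "c = Min (insert (1/4) (C ` T))"
  have \<eta>_le: "\<eta> \<le> E p/2" if "p \<in> T" for p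
    unfolding \<eta>_def using T that by (intro Min_le) auto
  have c_le: "c \<le> C p" if "p \<in> T" for p
    unfolding c_def using T that by (intro Min_le) auto
  have c_quarter: "c \<le> 1/4"
    unfolding c_def using T by (intro Min_le) auto
  have \<eta>: "0 < \<eta>" "\<eta> \<le> 1" and c: "0 < c"
    unfolding \<eta>_def c_def using T EC by (auto simp: Min_gr_iff)
  have "corkscrew_on {x} \<Omega> \<eta> c" if x: "x \<in> \<Omega>" for x
  proof (cases "ball x \<eta> \<subseteq> \<Omega>")
    case True
    then show ?thesis using c_quarter by (intro corkscrew_on_mono[OF corkscrew_on_interior]) auto
  next
    case False
    have "ball x \<eta> \<inter> \<Omega> \<noteq> {}" using x \<eta> by (metis IntI centre_in_ball empty_iff)
    moreover have "ball x \<eta> - \<Omega> \<noteq> {}" using False by blast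
    ultimately obtain q where q: "q \<in> ball x \<eta>" "q \<in> frontier \<Omega>"
      using connected_Int_frontier[OF connected_ball] by blast
    then obtain p where p: "p \<in> T" "q \<in> ball p (E p/2)" using T by blast
    then have "x \<in> ball p (E p)"
      using q \<eta>_le[OF p(1)] dist_triangle[of p x q] by (simp add: dist_commute)
    moreover have "corkscrew_on (\<Omega> \<inter> ball p (E p)) \<Omega> (E p) (C p)" "\<eta> \<le> E p"
      using EC[of p] \<eta>_le[OF p(1)] p T by auto
    ultimately show ?thesis
      using x c_le[OF p(1)] by (elim corkscrew_on_mono) auto
  qed
  then have "corkscrew_on \<Omega> \<Omega> \<eta> c" unfolding corkscrew_on_def by blast
  then show thesis using that \<eta> c by blast
qed

section \<open>The fractional kernel away from the diagonal\<close>

definition frac_kernel_far :: "real \<Rightarrow> real \<Rightarrow> 'a::euclidean_space \<Rightarrow> 'a \<Rightarrow> real" where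
  "frac_kernel_far s \<epsilon> x y = (if \<epsilon> \<le> dist x y then frac_kernel s x y else 0)"

lemma frac_kernel_nonneg: "0 \<le> frac_kernel s x y"
  by (simp add: frac_kernel_def)

lemma frac_kernel_far_nonneg: "0 \<le> frac_kernel_far s \<epsilon> x y"
  by (simp add: frac_kernel_far_def frac_kernel_nonneg)

lemma frac_kernel_far_le_frac_kernel: "frac_kernel_far s \<epsilon> x y \<le> frac_kernel s x y"
  by (simp add: frac_kernel_far_def frac_kernel_nonneg)

lemma frac_kernel_far_commute: "frac_kernel_far s \<epsilon> y x = frac_kernel_far s \<epsilon> x y"
  by (simp add: frac_kernel_far_def frac_kernel_def dist_commute)

lemma frac_kernel_ge:
  fixes x y :: "'a::euclidean_space"
  assumes "0 \<le> s" "0 < dist x y" "dist x y \<le> r" "r \<le> 1"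
  shows "1 / r ^ DIM('a) \<le> frac_kernel s x y"
proof -
  have "dist x y powr (real DIM('a) + 2 * s) \<le> dist x y powr real DIM('a)"
    using assms by (intro powr_mono') auto
  also have "\<dots> \<le> r ^ DIM('a)" using assms by (simp add: powr_realpow power_mono)
  finally show ?thesis unfolding frac_kernel_def using assms by (simp add: frac_le)
qed

lemma frac_kernel_far_le:
  fixes x y :: "'a::euclidean_space"
  assumes "0 \<le> s" "s < 1" "0 < \<epsilon>" "\<epsilon> \<le> 1"
  shows "frac_kernel_far s \<epsilon> x y \<le> 1 / \<epsilon> ^ (DIM('a) + 2)"
proof (cases "\<epsilon> \<le> dist x y")
  case True
  have "\<epsilon> ^ (DIM('a) + 2) = \<epsilon> powr (real DIM('a) + 2)"
    using powr_realpow[of \<epsilon> "DIM('a) + 2"] assms by (simp add: add.commute)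
  also have "\<dots> \<le> \<epsilon> powr (real DIM('a) + 2 * s)"
    using assms by (intro powr_mono') auto
  also have "\<dots> \<le> dist x y powr (real DIM('a) + 2 * s)"
    using assms True by (intro powr_mono2) auto
  finally show ?thesis
    using True assms unfolding frac_kernel_far_def frac_kernel_def by (simp add: frac_le)
qed (use assms in \<open>simp add: frac_kernel_far_def\<close>)

lemma borel_measurable_fst_lebesgue_on_pair [measurable]:
  "fst \<in> borel_measurable (lebesgue_on A \<Otimes>\<^sub>M lebesgue_on B)"
  using measurable_compose[OF measurable_fst id_borel_measurable_lebesgue_on] by (simp add: comp_def)

lemma borel_measurable_snd_lebesgue_on_pair [measurable]:
  "snd \<in> borel_measurable (lebesgue_on A \<Otimes>\<^sub>M lebesgue_on B)"
  using measurable_compose[OF measurable_snd id_borel_measurable_lebesgue_on] by (simp add: comp_def)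

lemma borel_measurable_frac_kernel_pair [measurable]:
  "(\<lambda>p. frac_kernel s (fst p) (snd p)) \<in> borel_measurable (lebesgue_on A \<Otimes>\<^sub>M lebesgue_on B)"
  unfolding frac_kernel_def by measurable

lemma borel_measurable_frac_kernel_far_pair [measurable]:
  "(\<lambda>p. frac_kernel_far s \<epsilon> (fst p) (snd p)) \<in> borel_measurable (lebesgue_on A \<Otimes>\<^sub>M lebesgue_on B)"
  unfolding frac_kernel_far_def frac_kernel_def by measurable

lemma disjoint_family_quartic_annuli:
  fixes x :: "'a::metric_space"
  assumes "0 \<le> r"
  shows "disjoint_family (\<lambda>j::nat. ball x (r * (1/4)^j) - cball x (r * (1/4)^j / 4))"
proof -
  have "(ball x (r * (1/4)^i) - cball x (r * (1/4)^i / 4)) \<inter>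
      (ball x (r * (1/4)^j) - cball x (r * (1/4)^j / 4)) = {}" if "i < j" for i j :: nat
  proof -
    have "r * (1/4)^j \<le> r * (1/4)^Suc i"
      using assms that by (intro mult_left_mono power_decreasing) auto
    then show ?thesis by auto
  qed
  then show ?thesis
    unfolding disjoint_family_on_def by (metis Int_commute nat_neq_iff)
qed

lemma nn_integral_ge_sum_disjoint_family:
  fixes a :: "nat \<Rightarrow> ennreal" and f :: "'a \<Rightarrow> ennreal"
  assumes disj: "disjoint_family B" and B: "\<And>j. B j \<in> sets M"
    and le: "\<And>j y. j < J \<Longrightarrow> y \<in> B j \<Longrightarrow> a j \<le> f y"
  shows "(\<Sum>j<J. a j * emeasure M (B j)) \<le> (\<integral>\<^sup>+y. f y \<partial>M)"
proof -
  have "(\<Sum>j<J. a j * emeasure M (B j)) = (\<Sum>j<J. \<integral>\<^sup>+y. a j * indicator (B j) y \<partial>M)"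
    using B by (simp add: nn_integral_cmult_indicator)
  also have "\<dots> = (\<integral>\<^sup>+y. (\<Sum>j<J. a j * indicator (B j) y) \<partial>M)"
    using B by (intro nn_integral_sum[symmetric]) auto
  also have "\<dots> \<le> (\<integral>\<^sup>+y. f y \<partial>M)"
  proof (intro nn_integral_mono)
    fix y
    show "(\<Sum>j<J. a j * indicator (B j) y) \<le> f y"
    proof (cases "\<exists>i<J. y \<in> B i")
      case True
      then obtain i where i: "i < J" "y \<in> B i" by blast
      then have "(\<Sum>j<J. a j * indicator (B j) y) = a i"
        using disjoint_family_on_mono[OF subset_UNIV disj] by (intro sum_indicator_disjoint_family) auto
      then show ?thesis using le[OF i] by simp
    qed auto
  qed
  finally show ?thesis .
qed

text \<open>On the corkscrew ball at scale R the kernel is at least R^-N, while the ball has volume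
  proportional to (c R)^N; so each of the scales r0, r0/4, r0/16, ... contributes the same
  amount, and the balls are disjoint.\<close>
lemma frac_kernel_far_integral_ge:
  fixes \<Omega> :: "'a::euclidean_space set"
  assumes cork: "corkscrew_on \<Omega> \<Omega> r0 c" and r0: "0 < r0" "r0 \<le> 1" and c: "0 < c"
    and s: "0 \<le> s" and x: "x \<in> \<Omega>" and \<Omega>: "\<Omega> \<in> sets lebesgue"
  shows "ennreal (real J * (unit_ball_vol DIM('a) * c ^ DIM('a)))
     \<le> (\<integral>\<^sup>+ y. frac_kernel_far s (r0 * (1/4)^J) x y \<partial>lebesgue_on \<Omega>)"
proof -
  define R where "R j = r0 * (1/4::real)^j" for j :: nat
  have R: "0 < R j" "R j \<le> r0" for j
    unfolding R_def using r0 by (auto intro!: mult_left_le power_le_one)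
  have "\<forall>j. \<exists>z. ball z (c * R j) \<subseteq> \<Omega> \<inter> (ball x (R j) - cball x (R j / 4))"
    using cork x R unfolding corkscrew_on_def by blast
  then obtain Z where Z: "\<And>j. ball (Z j) (c * R j) \<subseteq> \<Omega> \<inter> (ball x (R j) - cball x (R j / 4))"
    by metis
  define B where "B j = ball (Z j) (c * R j)" for j
  have disj: "disjoint_family B"
  proof (rule disjoint_family_subset)
    show "disjoint_family (\<lambda>j. ball x (R j) - cball x (R j / 4))"
      using disjoint_family_quartic_annuli[of r0 x] r0 unfolding R_def by simp
    show "B j \<subseteq> ball x (R j) - cball x (R j / 4)" for j using Z[of j] unfolding B_def by blast
  qed
  have B_sets: "B j \<in> sets (lebesgue_on \<Omega>)" for j
    using Z \<Omega> unfolding B_def by (subst sets_restrict_space_iff) auto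
  have kernel_ge: "ennreal (1 / R j ^ DIM('a)) \<le> ennreal (frac_kernel_far s (r0 * (1/4)^J) x y)"
    if "j < J" "y \<in> B j" for j y
  proof -
    have d: "R j / 4 < dist x y" "dist x y < R j" using that Z[of j] unfolding B_def by auto
    have "R J \<le> R (Suc j)" using that r0 unfolding R_def by (intro mult_left_mono power_decreasing) auto
    then have "frac_kernel_far s (r0 * (1/4)^J) x y = frac_kernel s x y"
      using d unfolding frac_kernel_far_def R_def by simp
    moreover have "1 / R j ^ DIM('a) \<le> frac_kernel s x y"
      using d R[of j] r0 s by (intro frac_kernel_ge) auto
    ultimately show ?thesis by (simp add: ennreal_leI)
  qed
  have "ennreal (1 / R j ^ DIM('a)) * emeasure (lebesgue_on \<Omega>) (B j)
      = ennreal (unit_ball_vol DIM('a) * c ^ DIM('a))" for j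
  proof -
    have "emeasure (lebesgue_on \<Omega>) (B j) = ennreal (unit_ball_vol DIM('a) * (c * R j) ^ DIM('a))"
      using Z[of j] \<Omega> c R(1)[of j] unfolding B_def
      by (subst emeasure_restrict_space) (auto simp: emeasure_ball)
    then show ?thesis
      using R(1)[of j] c by (simp add: ennreal_mult[symmetric] power_mult_distrib field_simps)
  qed
  then have "ennreal (real J * (unit_ball_vol DIM('a) * c ^ DIM('a)))
      = (\<Sum>j<J. ennreal (1 / R j ^ DIM('a)) * emeasure (lebesgue_on \<Omega>) (B j))"
    using c by (simp add: ennreal_of_nat_eq_real_of_nat ennreal_mult)
  also have "\<dots> \<le> (\<integral>\<^sup>+ y. frac_kernel_far s (r0 * (1/4)^J) x y \<partial>lebesgue_on \<Omega>)"
    by (rule nn_integral_ge_sum_disjoint_family[OF disj B_sets kernel_ge])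
  finally show ?thesis .
qed

section \<open>Energy of truncations\<close>

lemma truncation_monotone:
  fixes a b K :: real
  shows "0 \<le> (a - b) * (max (a - K) 0 - max (b - K) 0)"
  by (auto simp: max_def mult_nonneg_nonneg mult_nonpos_nonpos)

lemma truncation_lipschitz:
  fixes a b K :: real
  shows "\<bar>max (a - K) 0 - max (b - K) 0\<bar> \<le> \<bar>a - b\<bar>"
  by (auto simp: max_def)

lemma truncation_product_le_square:
  fixes a b K :: real
  shows "(a - b) * (max (a - K) 0 - max (b - K) 0) \<le> (a - b)\<^sup>2"
proof -
  have "(a - b) * (max (a - K) 0 - max (b - K) 0) \<le> \<bar>a - b\<bar> * \<bar>max (a - K) 0 - max (b - K) 0\<bar>"
    by (metis abs_ge_self abs_mult)
  also have "\<dots> \<le> \<bar>a - b\<bar> * \<bar>a - b\<bar>" by (intro mult_left_mono truncation_lipschitz) simp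
  finally show ?thesis by (simp add: power2_eq_square)
qed

lemma truncation_energy_pointwise:
  fixes a b p q :: real
  assumes "0 \<le> p" "0 \<le> q"
  shows "p * a + q * b \<le> (a - b) * (p - q) + p * max b 0 + q * max a 0"
proof -
  have "0 \<le> p * (max b 0 - b) + q * (max a 0 - a)" using assms by simp
  then show ?thesis by (simp add: algebra_simps)
qed

lemma nn_integral_pair_swap:
  fixes f :: "'a \<Rightarrow> 'a \<Rightarrow> ennreal"
  assumes "sigma_finite_measure M"
    and [measurable]: "(\<lambda>p. f (fst p) (snd p)) \<in> borel_measurable (M \<Otimes>\<^sub>M M)"
  shows "(\<integral>\<^sup>+p. f (snd p) (fst p) \<partial>(M \<Otimes>\<^sub>M M)) = (\<integral>\<^sup>+p. f (fst p) (snd p) \<partial>(M \<Otimes>\<^sub>M M))"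
proof -
  interpret pair_sigma_finite M M using assms(1) by (simp add: pair_sigma_finite_def)
  have [measurable]: "(\<lambda>p. f (snd p) (fst p)) \<in> borel_measurable (M \<Otimes>\<^sub>M M)"
    using measurable_pair_swap[OF assms(2)] by simp
  have "(\<integral>\<^sup>+p. f (snd p) (fst p) \<partial>(M \<Otimes>\<^sub>M M)) = (\<integral>\<^sup>+x. \<integral>\<^sup>+y. f y x \<partial>M \<partial>M)"
    using sigma_finite_measure.nn_integral_fst[OF assms(1), of "\<lambda>p. f (snd p) (fst p)"] by simp
  also have "\<dots> = (\<integral>\<^sup>+p. f (fst p) (snd p) \<partial>(M \<Otimes>\<^sub>M M))"
    using nn_integral_snd[OF assms(2)] by simp
  finally show ?thesis .
qed

lemma nn_integral_pair_kernel_ge: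
  fixes g :: "'a \<Rightarrow> real" and k :: "'a \<Rightarrow> 'a \<Rightarrow> real"
  assumes M: "sigma_finite_measure M"
    and [measurable]: "g \<in> borel_measurable M" "(\<lambda>p. k (fst p) (snd p)) \<in> borel_measurable (M \<Otimes>\<^sub>M M)"
    and g: "\<And>x. 0 \<le> g x" and k: "\<And>x y. 0 \<le> k x y"
    and k_integral_ge: "\<And>x. x \<in> space M \<Longrightarrow> ennreal \<Lambda> \<le> (\<integral>\<^sup>+y. k x y \<partial>M)"
  shows "ennreal \<Lambda> * (\<integral>\<^sup>+x. g x \<partial>M) \<le> (\<integral>\<^sup>+p. g (fst p) * k (fst p) (snd p) \<partial>(M \<Otimes>\<^sub>M M))"
proof -
  have "ennreal \<Lambda> * (\<integral>\<^sup>+x. g x \<partial>M) = (\<integral>\<^sup>+x. ennreal \<Lambda> * ennreal (g x) \<partial>M)"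
    by (rule nn_integral_cmult[symmetric]) measurable
  also have "\<dots> \<le> (\<integral>\<^sup>+x. (\<integral>\<^sup>+y. k x y \<partial>M) * ennreal (g x) \<partial>M)"
    using k_integral_ge by (intro nn_integral_mono mult_right_mono) auto
  also have "\<dots> = (\<integral>\<^sup>+x. \<integral>\<^sup>+y. g x * k x y \<partial>M \<partial>M)"
  proof (intro nn_integral_cong)
    fix x assume "x \<in> space M"
    then have [measurable]: "(\<lambda>y. k x y) \<in> borel_measurable M"
      using measurable_Pair2[of "\<lambda>p. k (fst p) (snd p)"] by simp
    have "ennreal (g x * k x y) = ennreal (k x y) * ennreal (g x)" for y
      using g k by (simp add: ennreal_mult[symmetric] ac_simps)
    then show "(\<integral>\<^sup>+y. k x y \<partial>M) * ennreal (g x) = (\<integral>\<^sup>+y. g x * k x y \<partial>M)"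
      by (simp add: nn_integral_multc)
  qed
  also have "\<dots> = (\<integral>\<^sup>+p. g (fst p) * k (fst p) (snd p) \<partial>(M \<Otimes>\<^sub>M M))"
    using sigma_finite_measure.nn_integral_fst[OF M, of "\<lambda>p. ennreal (g (fst p) * k (fst p) (snd p))"]
    by simp
  finally show ?thesis .
qed

lemma nn_integral_pair_kernel_le:
  fixes a b :: "'a \<Rightarrow> real" and k :: "'a \<Rightarrow> 'a \<Rightarrow> real"
  assumes M: "sigma_finite_measure M"
    and [measurable]: "a \<in> borel_measurable M" "b \<in> borel_measurable M"
      "(\<lambda>p. k (fst p) (snd p)) \<in> borel_measurable (M \<Otimes>\<^sub>M M)"
    and a: "\<And>x. 0 \<le> a x" and b: "\<And>x. 0 \<le> b x" and k_le: "\<And>x y. k x y \<le> D" and D: "0 \<le> D"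
  shows "(\<integral>\<^sup>+p. a (fst p) * b (snd p) * k (fst p) (snd p) \<partial>(M \<Otimes>\<^sub>M M))
    \<le> ennreal D * (\<integral>\<^sup>+x. a x \<partial>M) * (\<integral>\<^sup>+x. b x \<partial>M)"
proof -
  have "(\<integral>\<^sup>+p. a (fst p) * b (snd p) * k (fst p) (snd p) \<partial>(M \<Otimes>\<^sub>M M))
      = (\<integral>\<^sup>+x. \<integral>\<^sup>+y. a x * b y * k x y \<partial>M \<partial>M)"
    using sigma_finite_measure.nn_integral_fst[OF M, of "\<lambda>p. ennreal (a (fst p) * b (snd p) * k (fst p) (snd p))"]
    by simp
  also have "\<dots> \<le> (\<integral>\<^sup>+x. \<integral>\<^sup>+y. (ennreal (a x) * ennreal D) * ennreal (b y) \<partial>M \<partial>M)"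
  proof (intro nn_integral_mono)
    fix x y
    have "a x * b y * k x y \<le> a x * b y * D"
      using a[of x] b[of y] by (intro mult_left_mono k_le) auto
    then show "ennreal (a x * b y * k x y) \<le> (ennreal (a x) * ennreal D) * ennreal (b y)"
      using D a[of x] b[of y] by (simp add: ennreal_leI ennreal_mult[symmetric] ac_simps)
  qed
  also have "\<dots> = (\<integral>\<^sup>+x. ennreal (a x) * (ennreal D * (\<integral>\<^sup>+y. b y \<partial>M)) \<partial>M)"
    by (simp add: nn_integral_cmult mult.assoc)
  also have "\<dots> = ennreal D * (\<integral>\<^sup>+x. a x \<partial>M) * (\<integral>\<^sup>+x. b x \<partial>M)"
    by (subst nn_integral_multc) (auto simp: ac_simps)
  finally show ?thesis .
qed

text \<open>Symmetrising v x u x k x y bounds it by half the energy integrand plus the cross terms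
  v x u y k x y, in which u may be replaced by max u 0.\<close>
lemma truncation_energy_lower_bound:
  fixes M :: "'a measure" and u :: "'a \<Rightarrow> real" and k :: "'a \<Rightarrow> 'a \<Rightarrow> real"
  assumes M: "sigma_finite_measure M"
    and [measurable]: "u \<in> borel_measurable M"
    and k_meas [measurable]: "(\<lambda>p. k (fst p) (snd p)) \<in> borel_measurable (M \<Otimes>\<^sub>M M)"
    and k_commute: "\<And>x y. k y x = k x y" and k_nonneg: "\<And>x y. 0 \<le> k x y"
    and k_le: "\<And>x y. k x y \<le> D"
    and k_integral_ge: "\<And>x. x \<in> space M \<Longrightarrow> ennreal \<Lambda> \<le> (\<integral>\<^sup>+y. k x y \<partial>M)"
    and K: "0 \<le> K"
  defines "v \<equiv> \<lambda>x. max (u x - K) 0"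
  shows "2 * (ennreal \<Lambda> * (\<integral>\<^sup>+x. v x * u x \<partial>M))
     \<le> (\<integral>\<^sup>+p. (u (fst p) - u (snd p)) * (v (fst p) - v (snd p)) * k (fst p) (snd p) \<partial>(M \<Otimes>\<^sub>M M))
       + 2 * (ennreal D * (\<integral>\<^sup>+x. v x \<partial>M) * (\<integral>\<^sup>+x. max (u x) 0 \<partial>M))"
proof -
  let ?P = "M \<Otimes>\<^sub>M M"
  define A where "A x y = (u x - u y) * (v x - v y) * k x y" for x y
  define B where "B x y = v x * max (u y) 0 * k x y" for x y
  define C where "C x y = v x * u x * k x y" for x y
  have v_meas [measurable]: "v \<in> borel_measurable M" unfolding v_def by measurable
  have vu_meas: "(\<lambda>x. v x * u x) \<in> borel_measurable M" and up_meas: "(\<lambda>x. max (u x) 0) \<in> borel_measurable M"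
    by measurable
  have [measurable]: "(\<lambda>p. A (fst p) (snd p)) \<in> borel_measurable ?P"
      "(\<lambda>p. B (fst p) (snd p)) \<in> borel_measurable ?P" "(\<lambda>p. B (snd p) (fst p)) \<in> borel_measurable ?P"
      "(\<lambda>p. C (fst p) (snd p)) \<in> borel_measurable ?P" "(\<lambda>p. C (snd p) (fst p)) \<in> borel_measurable ?P"
    unfolding A_def B_def C_def using k_commute by (auto intro!: borel_measurable_times)
  have v_nonneg: "0 \<le> v x" and vu_nonneg: "0 \<le> v x * u x" for x
    using K by (auto simp: v_def max_def)
  have D: "0 \<le> D" using k_nonneg k_le order_trans by blast
  have A_nonneg: "0 \<le> A x y" and B_nonneg: "0 \<le> B x y" and C_nonneg: "0 \<le> C x y" for x y
    unfolding A_def B_def C_def v_def using truncation_monotone v_nonneg vu_nonneg k_nonneg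
    by (auto intro!: mult_nonneg_nonneg simp: v_def)
  have pointwise: "ennreal (C x y) + ennreal (C y x) \<le> ennreal (A x y) + ennreal (B x y) + ennreal (B y x)"
    for x y
  proof -
    have "(v x * u x + v y * u y) * k x y
        \<le> ((u x - u y) * (v x - v y) + v x * max (u y) 0 + v y * max (u x) 0) * k x y"
      by (intro mult_right_mono truncation_energy_pointwise v_nonneg k_nonneg)
    then have "C x y + C y x \<le> A x y + B x y + B y x"
      unfolding A_def B_def C_def k_commute[of x y] by (simp add: algebra_simps)
    then show ?thesis
      using A_nonneg B_nonneg C_nonneg by (simp add: ennreal_plus[symmetric] del: ennreal_plus)
  qed
  have "2 * (ennreal \<Lambda> * (\<integral>\<^sup>+x. v x * u x \<partial>M))
      \<le> (\<integral>\<^sup>+p. C (fst p) (snd p) \<partial>?P) + (\<integral>\<^sup>+p. C (snd p) (fst p) \<partial>?P)"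
    using nn_integral_pair_kernel_ge[OF M vu_meas k_meas vu_nonneg k_nonneg k_integral_ge]
      nn_integral_pair_swap[OF M, of "\<lambda>x y. ennreal (C x y)"]
    unfolding C_def by (simp add: mult_2 add_mono)
  also have "\<dots> = (\<integral>\<^sup>+p. ennreal (C (fst p) (snd p)) + ennreal (C (snd p) (fst p)) \<partial>?P)"
    by (simp add: nn_integral_add)
  also have "\<dots> \<le> (\<integral>\<^sup>+p. ennreal (A (fst p) (snd p)) + ennreal (B (fst p) (snd p))
      + ennreal (B (snd p) (fst p)) \<partial>?P)"
    using pointwise by (intro nn_integral_mono) auto
  also have "\<dots> = (\<integral>\<^sup>+p. A (fst p) (snd p) \<partial>?P) + 2 * (\<integral>\<^sup>+p. B (fst p) (snd p) \<partial>?P)"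
    using nn_integral_pair_swap[OF M, of "\<lambda>x y. ennreal (B x y)"] by (simp add: nn_integral_add mult_2)
  also have "\<dots> \<le> (\<integral>\<^sup>+p. A (fst p) (snd p) \<partial>?P)
      + 2 * (ennreal D * (\<integral>\<^sup>+x. v x \<partial>M) * (\<integral>\<^sup>+x. max (u x) 0 \<partial>M))"
    using nn_integral_pair_kernel_le[OF M v_meas up_meas k_meas v_nonneg _ k_le D]
    unfolding B_def by (intro add_left_mono mult_left_mono) auto
  finally show ?thesis unfolding A_def .
qed

lemma Hs_truncation:
  assumes u: "u \<in> Hs s \<Omega>" and K: "0 \<le> K"
  shows "(\<lambda>x. max (u x - K) 0) \<in> Hs s \<Omega>"
proof -
  define v where "v x = max (u x - K) 0" for x
  have [measurable]: "u \<in> borel_measurable (lebesgue_on \<Omega>)"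
    and u2: "integrable (lebesgue_on \<Omega>) (\<lambda>x. (u x)\<^sup>2)"
    and u_energy: "(\<integral>\<^sup>+ x. \<integral>\<^sup>+ y. ennreal ((u x - u y)\<^sup>2 * frac_kernel s x y)
          \<partial>lebesgue_on \<Omega> \<partial>lebesgue_on \<Omega>) < \<infinity>"
    using u unfolding Hs_def by blast+
  have "(v x)\<^sup>2 \<le> (u x)\<^sup>2" for x
    using K by (auto simp: v_def max_def abs_le_square_iff[symmetric])
  then have "integrable (lebesgue_on \<Omega>) (\<lambda>x. (v x)\<^sup>2)"
    by (intro Bochner_Integration.integrable_bound[OF u2]) (auto simp: v_def)
  moreover have "(v x - v y)\<^sup>2 * frac_kernel s x y \<le> (u x - u y)\<^sup>2 * frac_kernel s x y" for x y
    using truncation_lipschitz[of "u x" K "u y"]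
    by (intro mult_right_mono frac_kernel_nonneg) (simp_all add: v_def abs_le_square_iff[symmetric])
  then have "(\<integral>\<^sup>+ x. \<integral>\<^sup>+ y. ennreal ((v x - v y)\<^sup>2 * frac_kernel s x y) \<partial>lebesgue_on \<Omega> \<partial>lebesgue_on \<Omega>)
      < \<infinity>"
    by (intro le_less_trans[OF _ u_energy] nn_integral_mono ennreal_leI)
  ultimately show ?thesis unfolding Hs_def v_def by simp
qed

lemma Es_truncation_nn_integral:
  fixes \<Omega> :: "'a::euclidean_space set" and K :: real
  assumes \<Omega>: "\<Omega> \<in> lmeasurable" and u: "u \<in> Hs s \<Omega>"
  defines "v \<equiv> \<lambda>x. max (u x - K) 0"
  shows "0 \<le> Es s \<Omega> u v"
    and "(\<integral>\<^sup>+p. (u (fst p) - u (snd p)) * (v (fst p) - v (snd p)) * frac_kernel s (fst p) (snd p)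
          \<partial>(lebesgue_on \<Omega> \<Otimes>\<^sub>M lebesgue_on \<Omega>)) = ennreal (2 * Es s \<Omega> u v)"
proof -
  let ?M = "lebesgue_on \<Omega>"
  interpret finite_measure ?M using finite_measure_lebesgue_on[OF \<Omega>] .
  have [measurable]: "u \<in> borel_measurable ?M"
    and u_energy: "(\<integral>\<^sup>+ x. \<integral>\<^sup>+ y. ennreal ((u x - u y)\<^sup>2 * frac_kernel s x y) \<partial>?M \<partial>?M) < \<infinity>"
    using u unfolding Hs_def by blast+
  define w where "w p = (u (fst p) - u (snd p)) * (v (fst p) - v (snd p)) * frac_kernel s (fst p) (snd p)"
    for p
  have [measurable]: "w \<in> borel_measurable (?M \<Otimes>\<^sub>M ?M)" unfolding w_def v_def by measurable
  have w_nonneg: "0 \<le> w p" for p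
    unfolding w_def v_def by (intro mult_nonneg_nonneg truncation_monotone frac_kernel_nonneg)
  have w_le: "w p \<le> (u (fst p) - u (snd p))\<^sup>2 * frac_kernel s (fst p) (snd p)" for p
  proof -
    have "(u (fst p) - u (snd p)) * (v (fst p) - v (snd p)) \<le> (u (fst p) - u (snd p))\<^sup>2"
      unfolding v_def by (rule truncation_product_le_square)
    then show ?thesis unfolding w_def by (intro mult_right_mono frac_kernel_nonneg)
  qed
  have "(\<integral>\<^sup>+p. w p \<partial>(?M \<Otimes>\<^sub>M ?M))
      \<le> (\<integral>\<^sup>+p. (u (fst p) - u (snd p))\<^sup>2 * frac_kernel s (fst p) (snd p) \<partial>(?M \<Otimes>\<^sub>M ?M))"
    using w_le by (intro nn_integral_mono ennreal_leI) auto
  also have "\<dots> = (\<integral>\<^sup>+ x. \<integral>\<^sup>+ y. ennreal ((u x - u y)\<^sup>2 * frac_kernel s x y) \<partial>?M \<partial>?M)"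
    by (simp add: nn_integral_fst[symmetric])
  finally have w_integrable: "integrable (?M \<Otimes>\<^sub>M ?M) w"
    using u_energy w_nonneg by (intro integrableI_bounded) (auto simp: order.strict_trans1)
  have Es_eq: "Es s \<Omega> u v = integral\<^sup>L (?M \<Otimes>\<^sub>M ?M) w / 2"
    unfolding Es_def w_def by (simp add: case_prod_beta')
  have "0 \<le> integral\<^sup>L (?M \<Otimes>\<^sub>M ?M) w"
    using w_nonneg by (simp add: Bochner_Integration.integral_nonneg)
  then show "0 \<le> Es s \<Omega> u v" unfolding Es_eq by simp
  show "(\<integral>\<^sup>+p. w p \<partial>(?M \<Otimes>\<^sub>M ?M)) = ennreal (2 * Es s \<Omega> u v)"
    unfolding Es_eq using w_integrable w_nonneg by (simp add: nn_integral_eq_integral)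
qed

lemma (in finite_measure) integrable_truncation:
  fixes u :: "'a \<Rightarrow> real"
  assumes [measurable]: "u \<in> borel_measurable M" and u2: "integrable M (\<lambda>x. (u x)\<^sup>2)" and K: "0 \<le> K"
  shows "integrable M (\<lambda>x. max (u x - K) 0)" "integrable M (\<lambda>x. max (u x - K) 0 * u x)"
    and "integrable M (\<lambda>x. max (u x) 0)"
proof -
  have "integrable M u" by (rule square_integrable_imp_integrable) (use u2 in auto)
  then show "integrable M (\<lambda>x. max (u x - K) 0)" "integrable M (\<lambda>x. max (u x) 0)" by auto
  show "integrable M (\<lambda>x. max (u x - K) 0 * u x)"
    using K by (intro Bochner_Integration.integrable_bound[OF u2])
      (auto simp: max_def power2_eq_square mult_right_mono)
qed

lemma Es_truncation_ge:
  fixes \<Omega> :: "'a::euclidean_space set" and K :: real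
  assumes \<Omega>: "\<Omega> \<in> lmeasurable" and u: "u \<in> Hs s \<Omega>" and s: "0 \<le> s" "s < 1"
    and \<epsilon>: "0 < \<epsilon>" "\<epsilon> \<le> 1" and \<Lambda>: "0 \<le> \<Lambda>" and K: "0 \<le> K"
    and far: "\<And>x. x \<in> \<Omega> \<Longrightarrow> ennreal \<Lambda> \<le> (\<integral>\<^sup>+y. frac_kernel_far s \<epsilon> x y \<partial>lebesgue_on \<Omega>)"
  defines "v \<equiv> \<lambda>x. max (u x - K) 0"
  shows "\<Lambda> * (\<integral>x. v x * u x \<partial>lebesgue_on \<Omega>)
      - (\<integral>x. v x \<partial>lebesgue_on \<Omega>) * (\<integral>x. max (u x) 0 \<partial>lebesgue_on \<Omega>) / \<epsilon> ^ (DIM('a) + 2)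
    \<le> Es s \<Omega> u v"
proof -
  let ?M = "lebesgue_on \<Omega>"
  interpret finite_measure ?M using finite_measure_lebesgue_on[OF \<Omega>] .
  define D :: real where "D = 1 / \<epsilon> ^ (DIM('a) + 2)"
  define VU where "VU = (\<integral>x. v x * u x \<partial>?M)"
  define V where "V = (\<integral>x. v x \<partial>?M)"
  define U where "U = (\<integral>x. max (u x) 0 \<partial>?M)"
  have u_meas [measurable]: "u \<in> borel_measurable ?M" and u2: "integrable ?M (\<lambda>x. (u x)\<^sup>2)"
    using u unfolding Hs_def by blast+
  note integrable = integrable_truncation[OF u_meas u2 K]
  have vu_nonneg: "0 \<le> v x * u x" for x
    using K by (auto simp: v_def max_def)
  have VU: "(\<integral>\<^sup>+x. v x * u x \<partial>?M) = ennreal VU" "0 \<le> VU"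
    unfolding VU_def using integrable(2) vu_nonneg by (simp_all add: v_def nn_integral_eq_integral)
  have V: "(\<integral>\<^sup>+x. v x \<partial>?M) = ennreal V" "0 \<le> V"
    unfolding V_def v_def using integrable(1) by (simp_all add: nn_integral_eq_integral)
  have U: "(\<integral>\<^sup>+x. max (u x) 0 \<partial>?M) = ennreal U" "0 \<le> U"
    unfolding U_def using integrable(3) by (simp_all add: nn_integral_eq_integral)
  have D: "0 \<le> D" using \<epsilon> by (simp add: D_def)
  have "space ?M = \<Omega>" by simp
  then have "2 * (ennreal \<Lambda> * ennreal VU)
      \<le> (\<integral>\<^sup>+p. (u (fst p) - u (snd p)) * (v (fst p) - v (snd p)) * frac_kernel_far s \<epsilon> (fst p) (snd p)
          \<partial>(?M \<Otimes>\<^sub>M ?M)) + 2 * (ennreal D * ennreal V * ennreal U)"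
    using truncation_energy_lower_bound[OF sigma_finite_measure_axioms u_meas
        borel_measurable_frac_kernel_far_pair frac_kernel_far_commute frac_kernel_far_nonneg
        frac_kernel_far_le[OF s \<epsilon>] _ K, of \<Lambda>] far VU(1) V(1) U(1)
    unfolding v_def D_def by simp
  also have "(\<integral>\<^sup>+p. (u (fst p) - u (snd p)) * (v (fst p) - v (snd p)) * frac_kernel_far s \<epsilon> (fst p) (snd p)
          \<partial>(?M \<Otimes>\<^sub>M ?M))
      \<le> (\<integral>\<^sup>+p. (u (fst p) - u (snd p)) * (v (fst p) - v (snd p)) * frac_kernel s (fst p) (snd p)
          \<partial>(?M \<Otimes>\<^sub>M ?M))"
    unfolding v_def
    by (intro nn_integral_mono ennreal_leI mult_left_mono truncation_monotone frac_kernel_far_le_frac_kernel)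
  also have "\<dots> = ennreal (2 * Es s \<Omega> u v)"
    unfolding v_def by (rule Es_truncation_nn_integral[OF \<Omega> u])
  finally have "2 * (ennreal \<Lambda> * ennreal VU) \<le> ennreal (2 * Es s \<Omega> u v) + 2 * (ennreal D * ennreal V * ennreal U)"
    by (simp add: add_right_mono)
  then have "ennreal (2 * (\<Lambda> * VU)) \<le> ennreal (2 * Es s \<Omega> u v + 2 * (D * V * U))"
    using \<Lambda> VU(2) V(2) U(2) D Es_truncation_nn_integral(1)[OF \<Omega> u, of K]
    by (simp add: ennreal_mult ennreal_plus v_def)
  then have "2 * (\<Lambda> * VU) \<le> 2 * Es s \<Omega> u v + 2 * (D * V * U)"
    using V(2) U(2) D Es_truncation_nn_integral(1)[OF \<Omega> u, of K]
    by (subst (asm) ennreal_le_iff) (auto simp: v_def)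
  then show ?thesis unfolding VU_def V_def U_def D_def by simp
qed

section \<open>Level estimate for subsolutions\<close>

lemma Linf_AE_abs_le:
  assumes "Linf \<Omega> V"
  shows "AE x in lebesgue_on \<Omega>. \<bar>V x\<bar> \<le> Linf_norm \<Omega> V"
proof -
  let ?E = "esssup (lebesgue_on \<Omega>) (\<lambda>x. ereal \<bar>V x\<bar>)"
  have "?E < \<infinity>" using assms unfolding Linf_def by blast
  with esssup_AE[of "\<lambda>x. ereal \<bar>V x\<bar>" "lebesgue_on \<Omega>"] show ?thesis
    unfolding Linf_norm_def by (elim AE_mp) (cases ?E, auto)
qed

lemma integral_mult_le_of_AE_abs_le:
  fixes V g :: "'a \<Rightarrow> real"
  assumes V: "AE x in M. \<bar>V x\<bar> \<le> m" and g: "integrable M g" "\<And>x. 0 \<le> g x" and m: "0 \<le> m"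
  shows "(\<integral>x. V x * g x \<partial>M) \<le> m * (\<integral>x. g x \<partial>M)"
proof (cases "integrable M (\<lambda>x. V x * g x)")
  case True
  have "(\<integral>x. V x * g x \<partial>M) \<le> (\<integral>x. m * g x \<partial>M)"
  proof (rule integral_mono_AE[OF True])
    show "AE x in M. V x * g x \<le> m * g x"
      using V by eventually_elim (metis abs_le_D1 g(2) mult_right_mono)
  qed (use g in simp)
  then show ?thesis by simp
next
  case False
  then show ?thesis using g m by (simp add: not_integrable_integral_eq Bochner_Integration.integral_nonneg)
qed

lemma (in finite_measure) integral_le_half_measure_plus_square:
  fixes f :: "'a \<Rightarrow> real"
  assumes [measurable]: "f \<in> borel_measurable M" and f2: "integrable M (\<lambda>x. (f x)\<^sup>2)"
  shows "(\<integral>x. f x \<partial>M) \<le> (measure M (space M) + (\<integral>x. (f x)\<^sup>2 \<partial>M)) / 2"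
proof -
  have "integrable M f" by (rule square_integrable_imp_integrable) (use f2 in auto)
  moreover have "f x \<le> (1 + (f x)\<^sup>2) / 2" for x
    using zero_le_power2[of "f x - 1"] by (simp add: power2_diff)
  ultimately have "(\<integral>x. f x \<partial>M) \<le> (\<integral>x. (1 + (f x)\<^sup>2) / 2 \<partial>M)"
    using f2 by (intro integral_mono) auto
  also have "\<dots> = (measure M (space M) + (\<integral>x. (f x)\<^sup>2 \<partial>M)) / 2"
    using f2 by simp
  finally show ?thesis .
qed

lemma integral_pos_part_le_L2_norm_on:
  fixes u :: "'a::euclidean_space \<Rightarrow> real"
  assumes \<Omega>: "\<Omega> \<in> lmeasurable" and [measurable]: "u \<in> borel_measurable (lebesgue_on \<Omega>)"
    and u2: "integrable (lebesgue_on \<Omega>) (\<lambda>x. (u x)\<^sup>2)"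
  shows "(\<integral>x. max (u x) 0 \<partial>lebesgue_on \<Omega>)
    \<le> (measure (lebesgue_on \<Omega>) \<Omega> + (L2_norm_on \<Omega> (\<lambda>x. max (u x) 0))\<^sup>2) / 2"
proof -
  interpret finite_measure "lebesgue_on \<Omega>" using finite_measure_lebesgue_on[OF \<Omega>] .
  have "integrable (lebesgue_on \<Omega>) (\<lambda>x. (max (u x) 0)\<^sup>2)"
    by (intro Bochner_Integration.integrable_bound[OF u2]) (auto simp: max_def)
  moreover have "(L2_norm_on \<Omega> (\<lambda>x. max (u x) 0))\<^sup>2 = (\<integral>x. (max (u x) 0)\<^sup>2 \<partial>lebesgue_on \<Omega>)"
    unfolding L2_norm_on_def by (simp add: Bochner_Integration.integral_nonneg)
  ultimately show ?thesis using integral_le_half_measure_plus_square[of "\<lambda>x. max (u x) 0"] by simp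
qed

lemma weak_subsolution_truncation_bound:
  fixes \<Omega> :: "'a::euclidean_space set" and K :: real
  assumes \<Omega>: "\<Omega> \<in> lmeasurable" and sub: "weak_subsolution s \<Omega> V f u" and s: "0 \<le> s" "s < 1"
    and V: "Linf \<Omega> V" and f: "Linf \<Omega> f" and \<epsilon>: "0 < \<epsilon>" "\<epsilon> \<le> 1" and \<Lambda>: "0 \<le> \<Lambda>" and K: "0 \<le> K"
    and far: "\<And>x. x \<in> \<Omega> \<Longrightarrow> ennreal \<Lambda> \<le> (\<integral>\<^sup>+y. frac_kernel_far s \<epsilon> x y \<partial>lebesgue_on \<Omega>)"
  defines "v \<equiv> \<lambda>x. max (u x - K) 0"
  shows "(\<Lambda> - max (Linf_norm \<Omega> V) 0) * (\<integral>x. v x * u x \<partial>lebesgue_on \<Omega>)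
    \<le> (max (Linf_norm \<Omega> f) 0 + (\<integral>x. max (u x) 0 \<partial>lebesgue_on \<Omega>) / \<epsilon> ^ (DIM('a) + 2))
      * (\<integral>x. v x \<partial>lebesgue_on \<Omega>)"
proof -
  let ?M = "lebesgue_on \<Omega>"
  interpret finite_measure ?M using finite_measure_lebesgue_on[OF \<Omega>] .
  define VU where "VU = (\<integral>x. v x * u x \<partial>?M)"
  define V1 where "V1 = (\<integral>x. v x \<partial>?M)"
  define U1 where "U1 = (\<integral>x. max (u x) 0 \<partial>?M)"
  have u: "u \<in> Hs s \<Omega>" using sub unfolding weak_subsolution_def by blast
  then have u_meas: "u \<in> borel_measurable ?M" and u2: "integrable ?M (\<lambda>x. (u x)\<^sup>2)"
    unfolding Hs_def by blast+
  have v_apply: "v x = max (u x - K) 0" for x by (simp add: v_def)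
  note integrable = integrable_truncation[OF u_meas u2 K, folded v_apply]
  have v_nonneg: "0 \<le> v x" and vu_nonneg: "0 \<le> v x * u x" for x
    using K by (simp_all add: v_def max_def)
  have AE_V: "AE x in ?M. \<bar>- V x\<bar> \<le> max (Linf_norm \<Omega> V) 0"
    using Linf_AE_abs_le[OF V] by eventually_elim simp
  have AE_f: "AE x in ?M. \<bar>f x\<bar> \<le> max (Linf_norm \<Omega> f) 0"
    using Linf_AE_abs_le[OF f] by eventually_elim simp
  have "v \<in> Hs s \<Omega>" using Hs_truncation[OF u K] unfolding v_def .
  moreover have "AE x in ?M. 0 \<le> v x" by (simp add: v_nonneg)
  ultimately have "Es s \<Omega> u v + (\<integral>x. V x * u x * v x \<partial>?M) \<le> (\<integral>x. f x * v x \<partial>?M)"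
    using sub unfolding weak_subsolution_def by (meson mp bspec)
  moreover have "\<Lambda> * VU - V1 * U1 / \<epsilon> ^ (DIM('a) + 2) \<le> Es s \<Omega> u v"
    using Es_truncation_ge[OF \<Omega> u s \<epsilon> \<Lambda> K far] unfolding VU_def V1_def U1_def v_def .
  moreover have "- (\<integral>x. V x * u x * v x \<partial>?M) \<le> max (Linf_norm \<Omega> V) 0 * VU"
  proof -
    have "(\<lambda>x. - V x * (v x * u x)) = (\<lambda>x. - (V x * u x * v x))" by (simp add: fun_eq_iff)
    then show ?thesis
      using integral_mult_le_of_AE_abs_le[OF AE_V integrable(2) vu_nonneg] unfolding VU_def by simp
  qed
  moreover have "(\<integral>x. f x * v x \<partial>?M) \<le> max (Linf_norm \<Omega> f) 0 * V1"
    using integral_mult_le_of_AE_abs_le[OF AE_f integrable(1) v_nonneg] unfolding V1_def by simp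
  moreover have "(\<Lambda> - max (Linf_norm \<Omega> V) 0) * VU = \<Lambda> * VU - max (Linf_norm \<Omega> V) 0 * VU"
    and "(max (Linf_norm \<Omega> f) 0 + U1 / \<epsilon> ^ (DIM('a) + 2)) * V1
      = max (Linf_norm \<Omega> f) 0 * V1 + V1 * U1 / \<epsilon> ^ (DIM('a) + 2)"
    by (simp_all add: algebra_simps)
  ultimately show ?thesis unfolding VU_def V1_def U1_def by linarith
qed

lemma weak_subsolution_le_level:
  fixes \<Omega> :: "'a::euclidean_space set"
  assumes \<Omega>: "\<Omega> \<in> lmeasurable" and sub: "weak_subsolution s \<Omega> V f u" and s: "0 \<le> s" "s < 1"
    and V: "Linf \<Omega> V" and f: "Linf \<Omega> f" and \<epsilon>: "0 < \<epsilon>" "\<epsilon> \<le> 1"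
    and far: "\<And>x. x \<in> \<Omega> \<Longrightarrow> ennreal \<Lambda> \<le> (\<integral>\<^sup>+y. frac_kernel_far s \<epsilon> x y \<partial>lebesgue_on \<Omega>)"
    and \<Lambda>: "1 + max (Linf_norm \<Omega> V) 0 \<le> \<Lambda>"
    and K: "max (Linf_norm \<Omega> f) 0
      + (measure (lebesgue_on \<Omega>) \<Omega> + (L2_norm_on \<Omega> (\<lambda>x. max (u x) 0))\<^sup>2) / (2 * \<epsilon> ^ (DIM('a) + 2)) < K"
  shows "AE x in lebesgue_on \<Omega>. u x \<le> K"
proof -
  let ?M = "lebesgue_on \<Omega>"
  interpret finite_measure ?M using finite_measure_lebesgue_on[OF \<Omega>] .
  define v where "v x = max (u x - K) 0" for x
  define VU where "VU = (\<integral>x. v x * u x \<partial>?M)"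
  define V1 where "V1 = (\<integral>x. v x \<partial>?M)"
  define X where "X = (measure ?M \<Omega> + (L2_norm_on \<Omega> (\<lambda>x. max (u x) 0))\<^sup>2) / 2"
  define B where "B = max (Linf_norm \<Omega> f) 0 + X / \<epsilon> ^ (DIM('a) + 2)"
  have u: "u \<in> Hs s \<Omega>" using sub unfolding weak_subsolution_def by blast
  then have u_meas: "u \<in> borel_measurable ?M" and u2: "integrable ?M (\<lambda>x. (u x)\<^sup>2)"
    unfolding Hs_def by blast+
  have "X / \<epsilon> ^ (DIM('a) + 2)
      = (measure ?M \<Omega> + (L2_norm_on \<Omega> (\<lambda>x. max (u x) 0))\<^sup>2) / (2 * \<epsilon> ^ (DIM('a) + 2))"
    by (simp add: X_def)
  then have B_less: "B < K" using K unfolding B_def by simp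
  have "0 \<le> X / \<epsilon> ^ (DIM('a) + 2)" using \<epsilon> by (simp add: X_def)
  then have K0: "0 \<le> K" using B_less unfolding B_def by linarith
  have v_nonneg: "0 \<le> v x" for x by (simp add: v_def)
  note integrable = integrable_truncation[OF u_meas u2 K0, folded v_def]
  have V1: "0 \<le> V1" unfolding V1_def by (rule Bochner_Integration.integral_nonneg) (rule v_nonneg)
  have VU: "0 \<le> VU"
    unfolding VU_def using K0 by (intro Bochner_Integration.integral_nonneg) (simp add: v_def max_def)
  have "VU \<le> (\<Lambda> - max (Linf_norm \<Omega> V) 0) * VU"
    using mult_right_mono[OF \<Lambda> VU] by (simp add: algebra_simps)
  also have "\<dots> \<le> (max (Linf_norm \<Omega> f) 0 + (\<integral>x. max (u x) 0 \<partial>?M) / \<epsilon> ^ (DIM('a) + 2)) * V1"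
    using weak_subsolution_truncation_bound[OF \<Omega> sub s V f \<epsilon> _ K0 far] \<Lambda>
    unfolding VU_def V1_def v_def by simp
  also have "\<dots> \<le> B * V1"
    using integral_pos_part_le_L2_norm_on[OF \<Omega> u_meas u2] \<epsilon> V1 unfolding B_def X_def
    by (intro mult_right_mono add_left_mono divide_right_mono) auto
  finally have "VU \<le> B * V1" .
  moreover have "K * V1 \<le> VU"
  proof -
    have "(\<integral>x. K * v x \<partial>?M) \<le> VU"
      unfolding VU_def using integrable K0
      by (intro integral_mono) (auto simp: v_def max_def mult_right_mono mult.commute)
    then show ?thesis unfolding V1_def by simp
  qed
  ultimately have "K * V1 \<le> B * V1" by linarith
  then have "V1 = 0" using B_less V1 by (metis le_less mult_le_cancel_right_pos not_le)
  then have "AE x in ?M. v x = 0"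
    using integrable(1) v_nonneg unfolding V1_def by (simp add: integral_nonneg_eq_0_iff_AE)
  then show ?thesis by eventually_elim (simp add: v_def)
qed

theorem theorem4p1:
  fixes \<Omega> :: "'a::euclidean_space set"
  assumes "lipschitz_set \<Omega>"
  shows "\<exists>c0 :: real \<Rightarrow> real \<Rightarrow> real \<Rightarrow> real. (\<forall>a b c. 0 < c0 a b c) \<and>
     (\<forall>s V f u. 0 \<le> s \<and> s < 1 \<and> Linf \<Omega> V \<and> Linf \<Omega> f \<and> weak_subsolution s \<Omega> V f u \<longrightarrow>
        (AE x in lebesgue_on \<Omega>.
           u x \<le> c0 (Linf_norm \<Omega> V) (Linf_norm \<Omega> f) (L2_norm_on \<Omega> (\<lambda>y. max (u y) 0))))"
proof -
  have \<Omega>: "\<Omega> \<in> lmeasurable"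
    using assms unfolding lipschitz_set_def by (auto intro: bounded_set_imp_lmeasurable)
  obtain r0 c where r0: "0 < r0" "r0 \<le> 1" and c: "0 < c" and cork: "corkscrew_on \<Omega> \<Omega> r0 c"
    using lipschitz_set_corkscrew[OF assms] .
  define \<beta> where "\<beta> = unit_ball_vol DIM('a) * c ^ DIM('a)"
  define J where "J a = nat \<lceil>(1 + max a 0) / \<beta>\<rceil>" for a
  define \<epsilon> where "\<epsilon> a = r0 * (1/4) ^ J a" for a
  define c0 where "c0 a b n = max b 0
      + (measure (lebesgue_on \<Omega>) \<Omega> + n\<^sup>2) / (2 * \<epsilon> a ^ (DIM('a) + 2)) + 1" for a b n
  have \<beta>: "0 < \<beta>" using c by (simp add: \<beta>_def)
  have \<epsilon>_le: "\<epsilon> a \<le> r0" for a unfolding \<epsilon>_def using r0 by (auto intro!: mult_left_le power_le_one)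
  have \<epsilon>: "0 < \<epsilon> a" "\<epsilon> a \<le> 1" for a
    using r0 order_trans[OF \<epsilon>_le r0(2)] by (simp_all add: \<epsilon>_def)
  have J: "1 + max a 0 \<le> real (J a) * \<beta>" for a
  proof -
    have "(1 + max a 0) / \<beta> \<le> real (J a)" unfolding J_def by linarith
    then show ?thesis using \<beta> by (simp add: field_simps)
  qed
  have "0 < c0 a b n" for a b n
    using \<epsilon>(1)[of a] by (simp add: c0_def add_nonneg_pos)
  moreover have "AE x in lebesgue_on \<Omega>. u x \<le> c0 (Linf_norm \<Omega> V) (Linf_norm \<Omega> f) (L2_norm_on \<Omega> (\<lambda>y. max (u y) 0))"
    if s: "0 \<le> s" "s < 1" and V: "Linf \<Omega> V" and f: "Linf \<Omega> f"
      and sub: "weak_subsolution s \<Omega> V f u" for s V f u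
  proof -
    have far: "ennreal (real (J (Linf_norm \<Omega> V)) * \<beta>)
        \<le> (\<integral>\<^sup>+y. frac_kernel_far s (\<epsilon> (Linf_norm \<Omega> V)) x y \<partial>lebesgue_on \<Omega>)" if "x \<in> \<Omega>" for x
      using frac_kernel_far_integral_ge[OF cork r0 c s(1) that fmeasurableD[OF \<Omega>]]
      unfolding \<beta>_def \<epsilon>_def .
    show ?thesis unfolding c0_def
      by (rule weak_subsolution_le_level[OF \<Omega> sub s V f \<epsilon>[of "Linf_norm \<Omega> V"] far J])
        (assumption, rule less_add_one)
  qed
  ultimately show ?thesis by blast
qed

end
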